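(* Let $\mathcal I,\mathcal J$ be ideals on $\omega$. Then (1) $\mathfrak b_s(\mathcal I\otimes\mathcal J)=\mathfrak b_s(\mathcal I)$; (2) $\mathfrak b_\sigma(\mathcal I\otimes\mathcal J)=\min\{\mathfrak b_\sigma(\mathcal I),\mathfrak b_\sigma(\mathcal J)\}$; (3) $\mathrm{add}_\omega(\mathcal I\otimes\mathcal J)\le\min\{\mathrm{add}_\omega(\mathcal I),\mathrm{add}_\omega(\mathcal J)\}$.
   Context: An ideal on a countably infinite set $S$ is a family of subsets of $S$ closed under finite unions and subsets, containing all finite sets, not containing $S$. $\mathcal I\otimes\mathcal J=\{A\subseteq\omega\times\omega:\{x\in\omega:\{y:(x,y)\in A\}\notin\mathcal J\}\in\mathcal I\}$, an ideal on $\omega\times\omega$. Convention: $\min\emptyset=\infty$, $\kappa<\infty$ for every cardinal. For an ideal $\mathcal I$ on a countably infinite set $S$: $\widehat{\mathcal P}_{\mathcal I}$ = sequences $(A_n)_{n\in\omega}\in\mathcal I^\omega$ of pairwise disjoint sets; $\mathcal P_{\mathcal I}$ = those with $\bigcup_nA_n=S$; $\mathcal M_{\mathcal I}$ = sequences $(E_k)_{k\in\omega}\in\mathcal I^\omega$ with $E_k\subseteq E_{k+1}$. $\mathfrak b_s(\mathcal I)=\min\{|\mathcal E|:\mathcal E\subseteq\widehat{\mathcal P}_{\mathcal I}$ and for every $(A_n)\in\mathcal P_{\mathcal I}$ there is $(E_n)\in\mathcal E$ with $\bigcup_n(A_{n+1}\cap\bigcup_{i\le n}E_i)\notin\mathcal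 I\}$; $\mathfrak b_\sigma(\mathcal I)=\min\{|\mathcal E|:\mathcal E\subseteq\mathcal M_{\mathcal I}$ and for every $(A_n)\in\mathcal M_{\mathcal I}$ there is $(E_n)\in\mathcal E$ with $E_n\not\subseteq A_n$ for infinitely many $n\}$; $\mathrm{add}_\omega(\mathcal I)=\min\{|\mathcal A|:\mathcal A\subseteq\mathcal I$ and for every $(B_n)\in\mathcal I^\omega$ there is $A\in\mathcal A$ with $A\not\subseteq B_n$ for all $n\}$. *)

theory Defs
  imports Main
begin

text \<open>An ideal on the countably infinite carrier UNIV (of type 'a; used with
  'a = nat for omega and 'a = nat \<times> nat for omega \<times> omega).\<close>
definition is_ideal :: "'a set set \<Rightarrow> bool" where
  "is_ideal I \<longleftrightarrow>
     (\<forall>A\<in>I. \<forall>B\<in>I. A \<union> B \<in> I) \<and>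
     (\<forall>A\<in>I. \<forall>B. B \<subseteq> A \<longrightarrow> B \<in> I) \<and>
     (\<forall>F. finite F \<longrightarrow> F \<in> I) \<and>
     UNIV \<notin> I"

definition ideal_prod :: "'a set set \<Rightarrow> 'b set set \<Rightarrow> ('a \<times> 'b) set set" where
  "ideal_prod I J = {A. {x. {y. (x, y) \<in> A} \<notin> J} \<in> I}"

definition hatP :: "'a set set \<Rightarrow> (nat \<Rightarrow> 'a set) set" where
  "hatP I = {A. (\<forall>n. A n \<in> I) \<and> (\<forall>m n. m \<noteq> n \<longrightarrow> A m \<inter> A n = {})}"

definition partP :: "'a set set \<Rightarrow> (nat \<Rightarrow> 'a set) set" where
  "partP I = {A \<in> hatP I. (\<Union>n. A n) = UNIV}"

definition incM :: "'a set set \<Rightarrow> (nat \<Rightarrow> 'a set) set" where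
  "incM I = {E. (\<forall>k. E k \<in> I) \<and> (\<forall>k. E k \<subseteq> E (Suc k))}"

text \<open>Families over which the minima defining the invariants are taken.\<close>
definition bs_fams :: "'a set set \<Rightarrow> (nat \<Rightarrow> 'a set) set set" where
  "bs_fams I = {\<E>. \<E> \<subseteq> hatP I \<and>
     (\<forall>A\<in>partP I. \<exists>E\<in>\<E>. (\<Union>n. A (Suc n) \<inter> (\<Union>i\<le>n. E i)) \<notin> I)}"

definition bsigma_fams :: "'a set set \<Rightarrow> (nat \<Rightarrow> 'a set) set set" where
  "bsigma_fams I = {\<E>. \<E> \<subseteq> incM I \<and>
     (\<forall>A\<in>incM I. \<exists>E\<in>\<E>. infinite {n. \<not> E n \<subseteq> A n})}"

definition addw_fams :: "'a set set \<Rightarrow> 'a set set set" where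
  "addw_fams I = {\<A>. \<A> \<subseteq> I \<and>
     (\<forall>B. (\<forall>n::nat. B n \<in> I) \<longrightarrow> (\<exists>A\<in>\<A>. \<forall>n. \<not> A \<subseteq> B n))}"

text \<open>minc W1 \<le> minc W2, where minc W = min {|X| : X \<in> W} (a cardinal, with
  min of the empty set = \<infinity> > every cardinal). Since cardinals are well
  ordered, this holds iff every member of W2 has cardinality at least that of
  some member of W1. |_| is card_of, \<le>o the cardinal order.\<close>
definition minc_le :: "'a set set \<Rightarrow> 'b set set \<Rightarrow> bool" where
  "minc_le W1 W2 \<longleftrightarrow> (\<forall>B\<in>W2. \<exists>A\<in>W1. (card_of A, card_of B) \<in> ordLeq)"

definition minc_eq :: "'a set set \<Rightarrow> 'b set set \<Rightarrow> bool" where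
  "minc_eq W1 W2 \<longleftrightarrow> minc_le W1 W2 \<and> minc_le W2 W1"

end

theory Submission
  imports Defs "HOL-Library.Disjoint_Sets"
begin

(* Call x a J-positive column of P \<subseteq> \<omega> \<times> Y when the vertical section of P at x is not in J;
  then P \<in> I \<otimes> J iff its J-positive columns form a set in I.  Cylinders A \<times> Y and
  \<omega> \<times> B carry witnessing families of I and of J over to I \<otimes> J, which gives every upper
  bound on the invariants of I \<otimes> J.  Conversely, a witness for b_s(I \<otimes> J) projects to
  one for b_s(I) by taking the J-positive columns of its partial unions and disjointifying.
  For b_\<sigma>, a witness for I \<otimes> J projects both to I (J-positive columns) and to J (unions
  of the J-small columns met so far); if both projections were dominated, by A \<in> M_I and
  C \<in> M_J say, then the sets A n \<times> Y \<union> {(x, y). y \<in> C (max x n)}, which lie in I \<otimes> J,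
  would dominate the original witness. *)

definition sec :: "('a \<times> 'b) set \<Rightarrow> 'a \<Rightarrow> 'b set" where
  "sec P x = {y. (x, y) \<in> P}"

definition pos_sections :: "'b set set \<Rightarrow> ('a \<times> 'b) set \<Rightarrow> 'a set" where
  "pos_sections J P = {x. sec P x \<notin> J}"

lemma mem_sec_iff [simp]: "y \<in> sec P x \<longleftrightarrow> (x, y) \<in> P"
  by (simp add: sec_def)

lemma sec_Times [simp]: "sec (A \<times> B) x = (if x \<in> A then B else {})"
  by (auto simp: sec_def)

lemma sec_Un [simp]: "sec (P \<union> Q) x = sec P x \<union> sec Q x"
  by (auto simp: sec_def)

lemma sec_mono: "P \<subseteq> Q \<Longrightarrow> sec P x \<subseteq> sec Q x"
  by (auto simp: sec_def)

lemma
  assumes "is_ideal I"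
  shows ideal_Un: "A \<in> I \<Longrightarrow> B \<in> I \<Longrightarrow> A \<union> B \<in> I"
    and ideal_subset: "A \<in> I \<Longrightarrow> B \<subseteq> A \<Longrightarrow> B \<in> I"
    and ideal_finite: "finite F \<Longrightarrow> F \<in> I"
    and UNIV_not_in_ideal: "UNIV \<notin> I"
  using assms unfolding is_ideal_def by blast+

lemma empty_in_ideal: "is_ideal I \<Longrightarrow> {} \<in> I"
  by (simp add: ideal_finite)

lemma Compl_not_in_ideal: "is_ideal I \<Longrightarrow> A \<in> I \<Longrightarrow> - A \<notin> I"
  by (metis Compl_partition ideal_Un UNIV_not_in_ideal)

lemma ideal_finite_UN:
  assumes "is_ideal I" "finite K" "\<And>k. k \<in> K \<Longrightarrow> F k \<in> I"
  shows "(\<Union>k\<in>K. F k) \<in> I"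
  using assms(2,3)
  by (induction K rule: finite_induct) (auto intro: ideal_Un[OF assms(1)] empty_in_ideal[OF assms(1)])

lemma incM_partial_unions:
  assumes "is_ideal I" "\<And>n. F n \<in> I"
  shows "(\<lambda>n. \<Union>m\<le>n. F m) \<in> incM I"
  using ideal_finite_UN[OF assms(1)] assms(2) by (auto simp: incM_def atMost_Suc)

lemma incM_mono: "E \<in> incM I \<Longrightarrow> m \<le> n \<Longrightarrow> E m \<subseteq> E n"
  unfolding incM_def using lift_Suc_mono_le[of E m n] by blast

lemma mem_ideal_prod_iff: "P \<in> ideal_prod I J \<longleftrightarrow> pos_sections J P \<in> I"
  by (simp add: ideal_prod_def pos_sections_def sec_def)

lemma pos_sections_mono:
  assumes "is_ideal J" "P \<subseteq> Q"
  shows "pos_sections J P \<subseteq> pos_sections J Q"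
  using ideal_subset[OF assms(1) _ sec_mono[OF assms(2)]] by (auto simp: pos_sections_def)

lemma pos_sections_cylinder [simp]: "is_ideal J \<Longrightarrow> pos_sections J (A \<times> UNIV) = A"
  by (auto simp: pos_sections_def UNIV_not_in_ideal empty_in_ideal)

lemma cylinder_subset_pos_sections: "is_ideal J \<Longrightarrow> A \<times> UNIV \<subseteq> P \<Longrightarrow> A \<subseteq> pos_sections J P"
  by (metis pos_sections_cylinder pos_sections_mono)

lemma cylinder_in_ideal_prod_iff: "is_ideal J \<Longrightarrow> A \<times> UNIV \<in> ideal_prod I J \<longleftrightarrow> A \<in> I"
  by (simp add: mem_ideal_prod_iff)

lemma UNIV_times_in_ideal_prod: "is_ideal I \<Longrightarrow> B \<in> J \<Longrightarrow> UNIV \<times> B \<in> ideal_prod I J"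
  by (simp add: mem_ideal_prod_iff pos_sections_def empty_in_ideal)

lemma ideal_prod_null_section: "is_ideal I \<Longrightarrow> P \<in> ideal_prod I J \<Longrightarrow> \<exists>x. sec P x \<in> J"
  unfolding mem_ideal_prod_iff pos_sections_def
  by (metis (mono_tags) UNIV_eq_I UNIV_not_in_ideal mem_Collect_eq)

lemma is_ideal_ideal_prod:
  assumes I: "is_ideal I" and J: "is_ideal J"
  shows "is_ideal (ideal_prod I J)"
  unfolding is_ideal_def
proof (intro conjI ballI allI impI)
  fix P Q assume "P \<in> ideal_prod I J" "Q \<in> ideal_prod I J"
  then have "pos_sections J P \<union> pos_sections J Q \<in> I"
    using ideal_Un[OF I] by (simp add: mem_ideal_prod_iff)
  moreover have "pos_sections J (P \<union> Q) \<subseteq> pos_sections J P \<union> pos_sections J Q"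
    using ideal_Un[OF J] by (auto simp: pos_sections_def)
  ultimately show "P \<union> Q \<in> ideal_prod I J"
    unfolding mem_ideal_prod_iff by (rule ideal_subset[OF I])
next
  fix P Q assume "P \<in> ideal_prod I J" "Q \<subseteq> P"
  then show "Q \<in> ideal_prod I J"
    unfolding mem_ideal_prod_iff using ideal_subset[OF I] pos_sections_mono[OF J] by blast
next
  fix F :: "('a \<times> 'b) set" assume "finite F"
  have "sec F x = snd ` (F \<inter> {p. fst p = x})" for x
    by force
  then have "sec F x \<in> J" for x
    using ideal_finite[OF J] \<open>finite F\<close> by simp
  then show "F \<in> ideal_prod I J"
    by (simp add: mem_ideal_prod_iff pos_sections_def empty_in_ideal[OF I])
next
  show "UNIV \<notin> ideal_prod I J"
    using UNIV_not_in_ideal[OF I] pos_sections_cylinder[OF J, of "UNIV :: 'a set"]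
    by (simp add: mem_ideal_prod_iff)
qed

lemma addw_famsD: "\<A> \<in> addw_fams I \<Longrightarrow> \<forall>n::nat. B n \<in> I \<Longrightarrow> \<exists>A\<in>\<A>. \<forall>n. \<not> A \<subseteq> B n"
  by (simp add: addw_fams_def)

lemma bsigma_famsD: "\<E> \<in> bsigma_fams I \<Longrightarrow> A \<in> incM I \<Longrightarrow> \<exists>E\<in>\<E>. infinite {n. \<not> E n \<subseteq> A n}"
  by (simp add: bsigma_fams_def)

lemma bs_famsD:
  "\<E> \<in> bs_fams I \<Longrightarrow> A \<in> partP I \<Longrightarrow> \<exists>E\<in>\<E>. (\<Union>n. A (Suc n) \<inter> (\<Union>i\<le>n. E i)) \<notin> I"
  by (simp add: bs_fams_def)

lemma minc_le_image:
  assumes "\<And>B. B \<in> W2 \<Longrightarrow> f ` B \<in> W1"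
  shows "minc_le W1 W2"
  unfolding minc_le_def using assms card_of_image by blast

lemma minc_le_image_of_least:
  assumes "f ` B0 \<in> W1" and "\<forall>B\<in>W. (card_of B0, card_of B) \<in> ordLeq"
  shows "minc_le W1 W"
proof -
  have "\<forall>B\<in>W. (card_of (f ` B0), card_of B) \<in> ordLeq"
    using assms(2) card_of_image ordLeq_transitive by blast
  with assms(1) show ?thesis
    unfolding minc_le_def by blast
qed

lemma minc_le_image_either:
  assumes "\<And>B. B \<in> W \<Longrightarrow> f ` B \<in> W1 \<or> g ` B \<in> W2"
  shows "minc_le W1 W \<or> minc_le W2 W"
proof (cases "W = {}")
  case True
  then show ?thesis
    by (simp add: minc_le_def)
next
  case False
  then obtain r where "r \<in> card_of ` W" and "\<forall>r'\<in>card_of ` W. (r, r') \<in> ordLeq"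
    using exists_minim_Well_order[of "card_of ` W"] card_of_Well_order by blast
  then obtain B0 where "B0 \<in> W" and "\<forall>B\<in>W. (card_of B0, card_of B) \<in> ordLeq"
    by blast
  then show ?thesis
    using assms minc_le_image_of_least by metis
qed

lemma addw_fams_cylinder:
  assumes J: "is_ideal J" and \<A>: "\<A> \<in> addw_fams I"
  shows "(\<lambda>A. A \<times> UNIV) ` \<A> \<in> addw_fams (ideal_prod I J)"
  unfolding addw_fams_def
proof (intro CollectI conjI allI impI)
  show "(\<lambda>A. A \<times> UNIV) ` \<A> \<subseteq> ideal_prod I J"
    using \<A> J by (auto simp: addw_fams_def cylinder_in_ideal_prod_iff)
next
  fix B :: "nat \<Rightarrow> _" assume "\<forall>n. B n \<in> ideal_prod I J"
  then have "\<forall>n. pos_sections J (B n) \<in> I"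
    by (simp add: mem_ideal_prod_iff)
  from addw_famsD[OF \<A> this]
  obtain A where "A \<in> \<A>" and "\<forall>n. \<not> A \<subseteq> pos_sections J (B n)"
    by blast
  then have "\<forall>n. \<not> A \<times> UNIV \<subseteq> B n"
    by (auto dest: cylinder_subset_pos_sections[OF J])
  then show "\<exists>P\<in>(\<lambda>A. A \<times> UNIV) ` \<A>. \<forall>n. \<not> P \<subseteq> B n"
    using \<open>A \<in> \<A>\<close> by (intro bexI[where x="A \<times> UNIV"]) auto
qed

lemma addw_fams_UNIV_times:
  assumes I: "is_ideal I" and \<A>: "\<A> \<in> addw_fams J"
  shows "(\<lambda>A. UNIV \<times> A) ` \<A> \<in> addw_fams (ideal_prod I J)"
  unfolding addw_fams_def
proof (intro CollectI conjI allI impI)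
  show "(\<lambda>A. UNIV \<times> A) ` \<A> \<subseteq> ideal_prod I J"
    using \<A> UNIV_times_in_ideal_prod[OF I] by (auto simp: addw_fams_def)
next
  fix B :: "nat \<Rightarrow> _" assume "\<forall>n. B n \<in> ideal_prod I J"
  then have "\<forall>n. \<exists>x. sec (B n) x \<in> J"
    using ideal_prod_null_section[OF I] by blast
  then obtain x where "\<forall>n. sec (B n) (x n) \<in> J"
    by metis
  from addw_famsD[OF \<A> this]
  obtain A where "A \<in> \<A>" and "\<forall>n. \<not> A \<subseteq> sec (B n) (x n)"
    by blast
  then have "\<forall>n. \<not> UNIV \<times> A \<subseteq> B n"
    by (force simp: subset_eq)
  then show "\<exists>P\<in>(\<lambda>A. UNIV \<times> A) ` \<A>. \<forall>n. \<not> P \<subseteq> B n"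
    using \<open>A \<in> \<A>\<close> by (intro bexI[where x="UNIV \<times> A"]) auto
qed

lemma pos_sections_incM:
  assumes J: "is_ideal J" and E: "E \<in> incM (ideal_prod I J)"
  shows "(\<lambda>n. pos_sections J (E n)) \<in> incM I"
  using E pos_sections_mono[OF J] unfolding incM_def mem_ideal_prod_iff by blast

lemma cylinder_incM: "is_ideal J \<Longrightarrow> E \<in> incM I \<Longrightarrow> (\<lambda>n. E n \<times> UNIV) \<in> incM (ideal_prod I J)"
  by (auto simp: incM_def cylinder_in_ideal_prod_iff)

lemma UNIV_times_incM: "is_ideal I \<Longrightarrow> E \<in> incM J \<Longrightarrow> (\<lambda>n. UNIV \<times> E n) \<in> incM (ideal_prod I J)"
  by (auto simp: incM_def UNIV_times_in_ideal_prod)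

lemma bsigma_fams_cylinder:
  assumes J: "is_ideal J" and \<E>: "\<E> \<in> bsigma_fams I"
  shows "(\<lambda>E n. E n \<times> UNIV) ` \<E> \<in> bsigma_fams (ideal_prod I J)"
  unfolding bsigma_fams_def
proof (intro CollectI conjI ballI)
  show "(\<lambda>E n. E n \<times> UNIV) ` \<E> \<subseteq> incM (ideal_prod I J)"
    using \<E> cylinder_incM[OF J] by (auto simp: bsigma_fams_def)
next
  fix B assume "B \<in> incM (ideal_prod I J)"
  then have "(\<lambda>n. pos_sections J (B n)) \<in> incM I"
    by (rule pos_sections_incM[OF J])
  from bsigma_famsD[OF \<E> this]
  obtain E where "E \<in> \<E>" and "infinite {n. \<not> E n \<subseteq> pos_sections J (B n)}"
    by blast
  moreover have "{n. \<not> E n \<subseteq> pos_sections J (B n)} \<subseteq> {n. \<not> E n \<times> UNIV \<subseteq> B n}"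
    by (auto dest: cylinder_subset_pos_sections[OF J])
  ultimately have "infinite {n. \<not> E n \<times> UNIV \<subseteq> B n}"
    using infinite_super by blast
  then show "\<exists>P\<in>(\<lambda>E n. E n \<times> UNIV) ` \<E>. infinite {n. \<not> P n \<subseteq> B n}"
    using \<open>E \<in> \<E>\<close> by (intro bexI[where x="\<lambda>n. E n \<times> UNIV"]) auto
qed

lemma bsigma_fams_UNIV_times:
  assumes I: "is_ideal I" and J: "is_ideal J" and \<E>: "\<E> \<in> bsigma_fams J"
  shows "(\<lambda>E n. UNIV \<times> E n) ` \<E> \<in> bsigma_fams (ideal_prod I J)"
  unfolding bsigma_fams_def
proof (intro CollectI conjI ballI)
  show "(\<lambda>E n. UNIV \<times> E n) ` \<E> \<subseteq> incM (ideal_prod I J)"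
    using \<E> UNIV_times_incM[OF I] by (auto simp: bsigma_fams_def)
next
  fix B assume "B \<in> incM (ideal_prod I J)"
  then have "\<forall>n. \<exists>x. sec (B n) x \<in> J"
    using ideal_prod_null_section[OF I] unfolding incM_def by blast
  then obtain x where x: "\<And>n. sec (B n) (x n) \<in> J"
    by metis
  let ?C = "\<lambda>n. \<Union>m\<le>n. sec (B m) (x m)"
  have "?C \<in> incM J"
    using incM_partial_unions[OF J] x .
  from bsigma_famsD[OF \<E> this]
  obtain E where "E \<in> \<E>" and "infinite {n. \<not> E n \<subseteq> ?C n}"
    by blast
  moreover have "{n. \<not> E n \<subseteq> ?C n} \<subseteq> {n. \<not> UNIV \<times> E n \<subseteq> B n}"
    by (force simp: subset_eq)
  ultimately have "infinite {n. \<not> UNIV \<times> E n \<subseteq> B n}"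
    using infinite_super by blast
  then show "\<exists>P\<in>(\<lambda>E n. UNIV \<times> E n) ` \<E>. infinite {n. \<not> P n \<subseteq> B n}"
    using \<open>E \<in> \<E>\<close> by (intro bexI[where x="\<lambda>n. UNIV \<times> E n"]) auto
qed

definition null_sections_upto :: "'b set set \<Rightarrow> (nat \<Rightarrow> (nat \<times> 'b) set) \<Rightarrow> nat \<Rightarrow> 'b set" where
  "null_sections_upto J E k =
     (\<Union>(x, j) \<in> {..k} \<times> {..k} \<inter> {(x, j). sec (E j) x \<in> J}. sec (E j) x)"

lemma null_sections_upto_incM:
  assumes J: "is_ideal J"
  shows "null_sections_upto J E \<in> incM J"
  unfolding incM_def
proof (intro CollectI conjI allI)
  fix k
  show "null_sections_upto J E k \<in> J"
    unfolding null_sections_upto_def by (rule ideal_finite_UN[OF J]) auto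
  show "null_sections_upto J E k \<subseteq> null_sections_upto J E (Suc k)"
    unfolding null_sections_upto_def by (rule UN_mono) auto
qed

(* Off A n, column x of prod_bound A C n is C (max x n); using max x n instead of n puts the
  J-small column x of E n into null_sections_upto J E (max x n), which C eventually dominates. *)
definition prod_bound :: "(nat \<Rightarrow> nat set) \<Rightarrow> (nat \<Rightarrow> 'b set) \<Rightarrow> nat \<Rightarrow> (nat \<times> 'b) set" where
  "prod_bound A C n = A n \<times> UNIV \<union> {(x, y). y \<in> C (max x n)}"

lemma sec_prod_bound: "sec (prod_bound A C n) x = (if x \<in> A n then UNIV else C (max x n))"
  by (auto simp: prod_bound_def)

lemma prod_bound_incM:
  assumes I: "is_ideal I" and A: "A \<in> incM I" and C: "C \<in> incM J"
  shows "prod_bound A C \<in> incM (ideal_prod I J)"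
  unfolding incM_def
proof (intro CollectI conjI allI)
  fix k
  have "pos_sections J (prod_bound A C k) \<subseteq> A k"
    using C by (auto simp: pos_sections_def sec_prod_bound incM_def)
  then show "prod_bound A C k \<in> ideal_prod I J"
    using A ideal_subset[OF I] by (auto simp: mem_ideal_prod_iff incM_def)
  show "prod_bound A C k \<subseteq> prod_bound A C (Suc k)"
    using A incM_mono[OF C, of "max x k" "max x (Suc k)" for x]
    by (fastforce simp: prod_bound_def incM_def)
qed

lemma prod_bound_dominates:
  assumes A: "\<forall>n\<ge>N. pos_sections J (E n) \<subseteq> A n"
    and C: "\<forall>n\<ge>N. null_sections_upto J E n \<subseteq> C n"
    and "n \<ge> N"
  shows "E n \<subseteq> prod_bound A C n"
proof safe
  fix x y assume xy: "(x, y) \<in> E n"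
  show "(x, y) \<in> prod_bound A C n"
  proof (cases "x \<in> A n")
    case True
    then show ?thesis
      by (simp add: prod_bound_def)
  next
    case False
    then have "sec (E n) x \<in> J"
      using A \<open>n \<ge> N\<close> by (auto simp: pos_sections_def)
    then have "y \<in> null_sections_upto J E (max x n)"
      using xy unfolding null_sections_upto_def by force
    moreover have "max x n \<ge> N"
      using \<open>n \<ge> N\<close> by simp
    ultimately have "y \<in> C (max x n)"
      using C by blast
    then show ?thesis
      by (simp add: prod_bound_def)
  qed
qed

lemma image_not_in_bsigma_fams:
  assumes "f ` \<E> \<subseteq> incM I" and "f ` \<E> \<notin> bsigma_fams I"
  obtains A where "A \<in> incM I" and "\<forall>E\<in>\<E>. finite {n. \<not> f E n \<subseteq> A n}"
  using assms by (auto simp: bsigma_fams_def)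

lemma bsigma_fams_ideal_prod_split:
  fixes I :: "nat set set"
  assumes I: "is_ideal I" and J: "is_ideal J" and \<E>: "\<E> \<in> bsigma_fams (ideal_prod I J)"
  shows "(\<lambda>E n. pos_sections J (E n)) ` \<E> \<in> bsigma_fams I \<or>
         null_sections_upto J ` \<E> \<in> bsigma_fams J"
proof (rule ccontr)
  assume "\<not> ?thesis"
  then have not_I: "(\<lambda>E n. pos_sections J (E n)) ` \<E> \<notin> bsigma_fams I"
    and not_J: "null_sections_upto J ` \<E> \<notin> bsigma_fams J"
    by simp_all
  have "(\<lambda>E n. pos_sections J (E n)) ` \<E> \<subseteq> incM I"
    using \<E> pos_sections_incM[OF J] by (auto simp: bsigma_fams_def)
  from image_not_in_bsigma_fams[OF this not_I]
  obtain A where A: "A \<in> incM I"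
    and A_dom: "\<forall>E\<in>\<E>. finite {n. \<not> pos_sections J (E n) \<subseteq> A n}"
    by blast
  have "null_sections_upto J ` \<E> \<subseteq> incM J"
    using null_sections_upto_incM[OF J] by blast
  from image_not_in_bsigma_fams[OF this not_J]
  obtain C where C: "C \<in> incM J"
    and C_dom: "\<forall>E\<in>\<E>. finite {n. \<not> null_sections_upto J E n \<subseteq> C n}"
    by blast
  from bsigma_famsD[OF \<E> prod_bound_incM[OF I A C]]
  obtain E where "E \<in> \<E>" and unbounded: "infinite {n. \<not> E n \<subseteq> prod_bound A C n}"
    by blast
  have "\<forall>\<^sub>F n in sequentially. pos_sections J (E n) \<subseteq> A n \<and> null_sections_upto J E n \<subseteq> C n"
    using A_dom C_dom \<open>E \<in> \<E>\<close>
    by (simp add: eventually_conj_iff eventually_cofinite flip: cofinite_eq_sequentially)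
  then obtain N where "\<forall>n\<ge>N. pos_sections J (E n) \<subseteq> A n"
    and "\<forall>n\<ge>N. null_sections_upto J E n \<subseteq> C n"
    unfolding eventually_sequentially by blast
  then have "E n \<subseteq> prod_bound A C n" if "n \<ge> N" for n
    using that by (rule prod_bound_dominates)
  then have "{n. \<not> E n \<subseteq> prod_bound A C n} \<subseteq> {..<N}"
    using not_le by blast
  then show False
    using unbounded finite_subset by blast
qed

lemma hatP_cylinder: "is_ideal J \<Longrightarrow> E \<in> hatP I \<Longrightarrow> (\<lambda>n. E n \<times> UNIV) \<in> hatP (ideal_prod I J)"
  by (auto simp: hatP_def cylinder_in_ideal_prod_iff)

lemma partP_cylinder: "is_ideal J \<Longrightarrow> A \<in> partP I \<Longrightarrow> (\<lambda>n. A n \<times> UNIV) \<in> partP (ideal_prod I J)"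
  using hatP_cylinder unfolding partP_def by fastforce

(* A point lying in no S n is put into class x, so A n \<subseteq> S n \<union> {n}. *)
lemma ex_partP_first_entry:
  fixes S :: "nat \<Rightarrow> nat set"
  assumes I: "is_ideal I" and S: "\<And>n. S n \<in> I"
  obtains A where "A \<in> partP I" and "\<And>m i x. x \<in> A m \<Longrightarrow> i < m \<Longrightarrow> x \<notin> S i"
proof -
  define a where "a x = (if \<exists>n. x \<in> S n then LEAST n. x \<in> S n else x)" for x
  define A where "A n = {x. a x = n}" for n
  have "A n \<subseteq> S n \<union> {n}" for n
    unfolding A_def a_def by (auto intro: LeastI)
  then have "A n \<in> I" for n
    using ideal_subset[OF I] ideal_Un[OF I S ideal_finite[OF I]] by blast
  then have "A \<in> partP I"
    by (auto simp: partP_def hatP_def A_def)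
  moreover have "a x \<le> i" if "x \<in> S i" for x i
    using that Least_le[of "\<lambda>n. x \<in> S n" i] by (auto simp: a_def)
  then have "x \<notin> S i" if "x \<in> A m" "i < m" for m i x
    using that by (fastforce simp: A_def)
  ultimately show ?thesis
    using that by blast
qed

lemma bs_fams_cylinder:
  fixes I :: "nat set set"
  assumes I: "is_ideal I" and J: "is_ideal J" and \<E>: "\<E> \<in> bs_fams I"
  shows "(\<lambda>E n. E n \<times> UNIV) ` \<E> \<in> bs_fams (ideal_prod I J)"
  unfolding bs_fams_def
proof (intro CollectI conjI ballI)
  show "(\<lambda>E n. E n \<times> UNIV) ` \<E> \<subseteq> hatP (ideal_prod I J)"
    using \<E> hatP_cylinder[OF J] by (auto simp: bs_fams_def)
next
  fix A' assume A': "A' \<in> partP (ideal_prod I J)"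
  define S where "S n = pos_sections J (\<Union>k\<le>n. A' k)" for n
  have "S n \<in> I" for n
    using incM_partial_unions[OF is_ideal_ideal_prod[OF I J], of A'] A'
    by (auto simp: S_def partP_def hatP_def incM_def mem_ideal_prod_iff)
  then obtain A where "A \<in> partP I" and A_S: "\<And>m i x. x \<in> A m \<Longrightarrow> i < m \<Longrightarrow> x \<notin> S i"
    using ex_partP_first_entry[OF I] by blast
  from bs_famsD[OF \<E> \<open>A \<in> partP I\<close>]
  obtain E where "E \<in> \<E>" and E: "(\<Union>n. A (Suc n) \<inter> (\<Union>i\<le>n. E i)) \<notin> I"
    by blast
  let ?X = "\<Union>n. A' (Suc n) \<inter> (\<Union>i\<le>n. E i \<times> UNIV)"
  (* For x in the trace of E, column x of A'_0 \<union> ... \<union> A'_i is J-small, and the rest of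
    column x lies in ?X. *)
  have "(\<Union>n. A (Suc n) \<inter> (\<Union>i\<le>n. E i)) \<subseteq> pos_sections J ?X"
  proof safe
    fix x n i assume "x \<in> A (Suc n)" "i \<le> n" "x \<in> E i"
    then have "sec (\<Union>k\<le>i. A' k) x \<in> J"
      using A_S[of x "Suc n" i] by (simp add: S_def pos_sections_def)
    then have "- sec (\<Union>k\<le>i. A' k) x \<notin> J"
      by (rule Compl_not_in_ideal[OF J])
    moreover have "- sec (\<Union>k\<le>i. A' k) x \<subseteq> sec ?X x"
    proof
      fix y assume y: "y \<in> - sec (\<Union>k\<le>i. A' k) x"
      obtain m where "(x, y) \<in> A' m"
        using A' by (auto simp: partP_def)
      with y have "i < m"
        by (cases "m \<le> i") auto
      with \<open>(x, y) \<in> A' m\<close> have "(x, y) \<in> A' (Suc (m - 1))" "i \<le> m - 1"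
        by auto
      then show "y \<in> sec ?X x"
        using \<open>x \<in> E i\<close> by auto
    qed
    ultimately show "x \<in> pos_sections J ?X"
      using ideal_subset[OF J] by (auto simp: pos_sections_def)
  qed
  then have "?X \<notin> ideal_prod I J"
    using E ideal_subset[OF I] by (auto simp: mem_ideal_prod_iff)
  then show "\<exists>P\<in>(\<lambda>E n. E n \<times> UNIV) ` \<E>.
      (\<Union>n. A' (Suc n) \<inter> (\<Union>i\<le>n. P i)) \<notin> ideal_prod I J"
    using \<open>E \<in> \<E>\<close> by blast
qed

lemma sec_UN_cylinder_Int:
  assumes "disjoint_family A" and "x \<in> A n"
  shows "sec (\<Union>m. A m \<times> UNIV \<inter> F m) x = sec (F n) x"
proof -
  have "x \<in> A m \<longleftrightarrow> m = n" for m
    using assms by (auto simp: disjoint_family_on_def)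
  then show ?thesis
    by auto
qed

lemma bs_fams_pos_sections:
  assumes I: "is_ideal I" and J: "is_ideal J" and \<E>: "\<E> \<in> bs_fams (ideal_prod I J)"
  shows "(\<lambda>E. disjointed (\<lambda>n. pos_sections J (\<Union>i\<le>n. E i))) ` \<E> \<in> bs_fams I"
  unfolding bs_fams_def
proof (intro CollectI conjI ballI)
  show "(\<lambda>E. disjointed (\<lambda>n. pos_sections J (\<Union>i\<le>n. E i))) ` \<E> \<subseteq> hatP I"
  proof clarify
    fix E assume "E \<in> \<E>"
    let ?D = "\<lambda>n. pos_sections J (\<Union>i\<le>n. E i)"
    have "(\<lambda>n. \<Union>i\<le>n. E i) \<in> incM (ideal_prod I J)"
      using \<E> \<open>E \<in> \<E>\<close> incM_partial_unions[OF is_ideal_ideal_prod[OF I J]]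
      by (auto simp: bs_fams_def hatP_def)
    then have D_I: "?D n \<in> I" for n
      by (simp add: incM_def mem_ideal_prod_iff)
    have "disjointed ?D n \<in> I" for n
      using ideal_subset[OF I D_I[of n] disjointed_subset[of ?D n]] .
    moreover have "disjoint_family (disjointed ?D)"
      by (rule disjoint_family_disjointed)
    ultimately show "disjointed ?D \<in> hatP I"
      unfolding hatP_def disjoint_family_on_def by blast
  qed
next
  fix A assume A: "A \<in> partP I"
  then have "(\<lambda>n. A n \<times> UNIV) \<in> partP (ideal_prod I J)"
    by (rule partP_cylinder[OF J])
  from bs_famsD[OF \<E> this]
  obtain E where "E \<in> \<E>" and X: "(\<Union>n. A (Suc n) \<times> UNIV \<inter> (\<Union>i\<le>n. E i)) \<notin> ideal_prod I J"
    by blast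
  let ?X = "\<Union>n. A (Suc n) \<times> UNIV \<inter> (\<Union>i\<le>n. E i)"
  let ?D = "\<lambda>n. pos_sections J (\<Union>i\<le>n. E i)"
  have disj: "disjoint_family (\<lambda>n. A (Suc n))"
    using A by (auto simp: partP_def hatP_def disjoint_family_on_def)
  have "pos_sections J ?X \<subseteq> (\<Union>n. A (Suc n) \<inter> (\<Union>i\<le>n. disjointed ?D i))"
  proof
    fix x assume x: "x \<in> pos_sections J ?X"
    then have "sec ?X x \<noteq> {}"
      using empty_in_ideal[OF J] by (auto simp: pos_sections_def)
    then obtain n where n: "x \<in> A (Suc n)"
      by (auto simp: sec_def)
    have "sec ?X x = sec (\<Union>i\<le>n. E i) x"
      by (rule sec_UN_cylinder_Int[OF disj n])
    with x have "x \<in> ?D n"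
      by (simp add: pos_sections_def)
    then have "x \<in> (\<Union>i\<le>n. ?D i)"
      by blast
    then have "x \<in> (\<Union>i\<le>n. disjointed ?D i)"
      using finite_UN_disjointed_eq[of ?D "Suc n"] by (simp add: atLeast0LessThan lessThan_Suc_atMost)
    with n show "x \<in> (\<Union>n. A (Suc n) \<inter> (\<Union>i\<le>n. disjointed ?D i))"
      by blast
  qed
  then have "(\<Union>n. A (Suc n) \<inter> (\<Union>i\<le>n. disjointed ?D i)) \<notin> I"
    using X ideal_subset[OF I] by (auto simp: mem_ideal_prod_iff)
  then show "\<exists>P\<in>(\<lambda>E. disjointed (\<lambda>n. pos_sections J (\<Union>i\<le>n. E i))) ` \<E>.
      (\<Union>n. A (Suc n) \<inter> (\<Union>i\<le>n. P i)) \<notin> I"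
    using \<open>E \<in> \<E>\<close> by blast
qed

theorem theorem5p13:
  fixes I J :: "nat set set"
  assumes "is_ideal I" and "is_ideal J"
  shows "minc_eq (bs_fams (ideal_prod I J)) (bs_fams I) \<and>
         (minc_le (bsigma_fams (ideal_prod I J)) (bsigma_fams I) \<and>
         minc_le (bsigma_fams (ideal_prod I J)) (bsigma_fams J) \<and>
         (minc_le (bsigma_fams I) (bsigma_fams (ideal_prod I J)) \<or>
          minc_le (bsigma_fams J) (bsigma_fams (ideal_prod I J)))) \<and>
         (minc_le (addw_fams (ideal_prod I J)) (addw_fams I) \<and>
         minc_le (addw_fams (ideal_prod I J)) (addw_fams J))"
proof -
  note I = assms(1) and J = assms(2)
  have "minc_eq (bs_fams (ideal_prod I J)) (bs_fams I)"
    unfolding minc_eq_def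
    using minc_le_image[OF bs_fams_cylinder[OF I J]] minc_le_image[OF bs_fams_pos_sections[OF I J]]
    by (rule conjI)
  moreover have "minc_le (bsigma_fams (ideal_prod I J)) (bsigma_fams I)"
    by (rule minc_le_image[OF bsigma_fams_cylinder[OF J]])
  moreover have "minc_le (bsigma_fams (ideal_prod I J)) (bsigma_fams J)"
    by (rule minc_le_image[OF bsigma_fams_UNIV_times[OF I J]])
  moreover have "minc_le (bsigma_fams I) (bsigma_fams (ideal_prod I J)) \<or>
      minc_le (bsigma_fams J) (bsigma_fams (ideal_prod I J))"
    by (rule minc_le_image_either[OF bsigma_fams_ideal_prod_split[OF I J]])
  moreover have "minc_le (addw_fams (ideal_prod I J)) (addw_fams I)"
    by (rule minc_le_image[OF addw_fams_cylinder[OF J]])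
  moreover have "minc_le (addw_fams (ideal_prod I J)) (addw_fams J)"
    by (rule minc_le_image[OF addw_fams_UNIV_times[OF I]])
  ultimately show ?thesis
    by simp
qed

end
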